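(* For each integer $n\ge0$ let $$f_n(x)=\frac{2}{\sqrt{\pi}}\sum_{k=0}^{n} c_{n,k}\,x^{k+1}\Big[p(k,0)+(-1)^k p(k,x)e^{-x^2}\Big]$$ and $\varepsilon_n(x)=\operatorname{erf}(x)-f_n(x)$. Then for every fixed $x>0$, $$\lim_{n\to\infty}\varepsilon_n'(x)=0,\qquad \lim_{n\to\infty}\varepsilon_n(x)=0,\qquad \lim_{n\to\infty}f_n(x)=\operatorname{erf}(x).$$ The convergence of $f_n$ to $\operatorname{erf}$ on $x>0$ is not uniform.
   Context: $\operatorname{erf}(x)=\frac{2}{\sqrt{\pi}}\int_0^x e^{-\lambda^2}\,d\lambda$. For integers $0\le k\le n$, $c_{n,k}=\frac{n!}{(n-k)!\,(k+1)!}\cdot\frac{(2n+1-k)!}{2\,(2n+1)!}$. The polynomials $p(k,x)$ are defined recursively by $p(0,x)=1$ and $p(k,x)=\frac{d}{dx}p(k-1,x)-2x\,p(k-1,x)$ for $k\ge1$. *)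

theory Defs
  imports "HOL-Analysis.Analysis" "HOL-Computational_Algebra.Polynomial"
begin

definition erf :: "real \<Rightarrow> real" where
  "erf x = 2 / sqrt pi *
     (if 0 \<le> x then integral {0..x} (\<lambda>t. exp (- (t^2)))
      else - integral {x..0} (\<lambda>t. exp (- (t^2))))"

definition c_coef :: "nat \<Rightarrow> nat \<Rightarrow> real" where
  "c_coef n k = fact n / (fact (n - k) * fact (k + 1)) *
                (fact (2 * n + 1 - k) / (2 * fact (2 * n + 1)))"

fun p_poly :: "nat \<Rightarrow> real poly" where
  "p_poly 0 = 1"
| "p_poly (Suc k) = pderiv (p_poly k) - [:0, 2:] * p_poly k"

definition p :: "nat \<Rightarrow> real \<Rightarrow> real" where
  "p k x = poly (p_poly k) x"

definition f_approx :: "nat \<Rightarrow> real \<Rightarrow> real" where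
  "f_approx n x = 2 / sqrt pi *
     (\<Sum>k=0..n. c_coef n k * x ^ (k + 1) *
        (p k 0 + (-1) ^ k * p k x * exp (- (x^2))))"

definition eps_err :: "nat \<Rightarrow> real \<Rightarrow> real" where
  "eps_err n x = erf x - f_approx n x"

end

(* The functions G_k(t) = p(k,t) e^(-t^2) are the derivatives of the Gaussian, so Cauchy's
   inequality for the entire function e^(-z^2) on circles of radius 2y gives
   y^k |G_k(t)| <= k! e^(4y^2) / 2^k.

   Integrate psi(s) = s^(n+1) (1-s)^(n+1) against the (2n+2)-nd derivative of s |-> e^(-(ys)^2)
   over [0,1] by parts 2n+2 times. The last term is a multiple of the integral of e^(-t^2) over
   [0,y], and since psi vanishes to order n+1 at both ends and is symmetric about 1/2, the
   boundary terms are exactly the terms of f_n(y). Hence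
     eps_n(y) = 2/sqrt(pi) * (-1)^(n+1) / (2n+2)! * int_0^1 y^(2n+3) psi(s) G_(2n+2)(ys) ds,
   and the Cauchy bound makes eps_n(y), and after differentiating under the integral sign also
   eps_n'(y), decay like n 4^(-n).

   Convergence is not uniform on (0,oo): each f_n is a nonconstant polynomial plus a polynomial
   times e^(-x^2), hence unbounded, whereas 0 <= erf <= sqrt(pi) there. *)

theory Submission
  imports Defs "HOL-Complex_Analysis.Complex_Analysis" "HOL-Real_Asymp.Real_Asymp"
    "HOL-Computational_Algebra.Fundamental_Theorem_Algebra"
begin

section \<open>Derivatives of the Gaussian\<close>

definition gauss_deriv :: "nat \<Rightarrow> real \<Rightarrow> real" where
  "gauss_deriv k t = p k t * exp (- (t^2))"

lemma has_real_derivative_gauss_deriv [derivative_intros]: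
  assumes "(f has_real_derivative f') (at x within S)"
  shows "((\<lambda>x. gauss_deriv k (f x)) has_real_derivative gauss_deriv (Suc k) (f x) * f')
           (at x within S)"
  unfolding gauss_deriv_def p_def
  using assms by (auto intro!: derivative_eq_intros simp: algebra_simps)

lemma continuous_on_gauss_deriv [continuous_intros]:
  "continuous_on S f \<Longrightarrow> continuous_on S (\<lambda>x. gauss_deriv k (f x))"
  unfolding gauss_deriv_def p_def by (intro continuous_intros)

lemma poly_map_poly_of_real:
  "poly (map_poly of_real q) (of_real t :: 'a::{real_algebra_1,comm_semiring_0}) = of_real (poly q t)"
  by (induction q) (auto simp: map_poly_pCons)

lemma map_poly_of_real_p_poly_Suc:
  "map_poly (of_real :: real \<Rightarrow> complex) (p_poly (Suc k))
     = pderiv (map_poly of_real (p_poly k)) - [:0, 2:] * map_poly of_real (p_poly k)"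
  by (rule poly_eqI)
     (auto simp: coeff_map_poly coeff_pderiv coeff_pCons mult_pCons_left split: nat.splits)

lemma higher_deriv_gaussian:
  "(deriv ^^ k) (\<lambda>z::complex. exp (- (z^2)))
     = (\<lambda>z. poly (map_poly of_real (p_poly k)) z * exp (- (z^2)))"
proof (induction k)
  case (Suc k)
  have "((\<lambda>z. poly (map_poly of_real (p_poly k)) z * exp (- (z^2))) has_field_derivative
          poly (map_poly of_real (p_poly (Suc k))) z * exp (- (z^2))) (at z)" for z :: complex
    by (auto intro!: derivative_eq_intros simp: map_poly_of_real_p_poly_Suc algebra_simps
             simp del: p_poly.simps)
  then show ?case
    by (auto simp: Suc.IH fun_eq_iff intro!: DERIV_imp_deriv)
qed simp

lemma abs_gauss_deriv_le:
  assumes "R > 0"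
  shows "\<bar>gauss_deriv k t\<bar> \<le> fact k * exp (R^2) / R^k"
proof -
  have "norm ((deriv ^^ k) (\<lambda>z::complex. exp (- (z^2))) (of_real t)) \<le> fact k * exp (R^2) / R^k"
  proof (rule Cauchy_inequality)
    fix z :: complex
    assume "norm (of_real t - z) = R"
    then have "\<bar>Im z\<bar> \<le> R"
      using abs_Im_le_cmod[of "of_real t - z"] by simp
    then have "(Im z)^2 \<le> R^2"
      using assms abs_le_square_iff[of "Im z" R] by simp
    then have "(Im z)^2 - (Re z)^2 \<le> R^2"
      using zero_le_power2[of "Re z"] by linarith
    then show "norm (exp (- (z^2))) \<le> exp (R^2)"
      by (simp add: power2_eq_square)
  qed (use assms in \<open>auto intro!: holomorphic_intros continuous_intros\<close>)
  moreover have "exp (- ((of_real t :: complex)^2)) = of_real (exp (- (t^2)))"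
    using exp_of_real[of "- (t^2)"] by simp
  ultimately show ?thesis
    by (simp add: higher_deriv_gaussian poly_map_poly_of_real gauss_deriv_def p_def
             flip: of_real_mult)
qed

lemma scaled_abs_gauss_deriv_le:
  assumes "y > 0"
  shows "y^k * \<bar>gauss_deriv k t\<bar> \<le> fact k * exp (4 * y^2) / 2^k"
proof -
  have "y^k * \<bar>gauss_deriv k t\<bar> \<le> y^k * (fact k * exp ((2*y)^2) / (2*y)^k)"
    using abs_gauss_deriv_le[of "2*y" k t] assms by (intro mult_left_mono) auto
  also have "\<dots> = fact k * exp (4 * y^2) / 2^k"
    using assms by (simp add: power_mult_distrib)
  finally show ?thesis .
qed

section \<open>The weight polynomial\<close>

definition psi_poly :: "nat \<Rightarrow> real poly" where
  "psi_poly n = monom 1 (n+1) * [:1, -1:]^(n+1)"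

lemma poly_psi_poly: "poly (psi_poly n) s = s^(n+1) * (1 - s)^(n+1)"
proof -
  have "poly [:1, -1:] s = 1 - s"
    by simp
  then show ?thesis
    by (simp only: psi_poly_def poly_mult poly_monom poly_power mult_1)
qed

lemma abs_poly_psi_poly_le_1: "s \<in> {0..1} \<Longrightarrow> \<bar>poly (psi_poly n) s\<bar> \<le> 1"
  unfolding poly_psi_poly by (auto simp: abs_mult intro!: mult_le_one power_le_one)

lemma coeff_one_minus_x_power:
  "coeff ([:1, -1:]^N :: 'a::comm_ring_1 poly) i = (-1)^i * of_nat (N choose i)"
proof (induction N arbitrary: i)
  case (Suc N)
  have "coeff ([:1, -1:]^Suc N :: 'a poly) i
          = coeff ([:1, -1:]^N) i - (if i = 0 then 0 else coeff ([:1, -1:]^N) (i - 1))"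
    by (cases i) (auto simp: mult_pCons_left coeff_pCons)
  also have "\<dots> = (-1)^i * of_nat (Suc N choose i)"
    by (cases i) (auto simp: Suc.IH algebra_simps)
  finally show ?case .
qed (auto simp: coeff_1 binomial_eq_0)

lemma coeff_psi_poly:
  "coeff (psi_poly n) j
     = (if j < n+1 then 0 else (-1)^(j-(n+1)) * of_nat ((n+1) choose (j-(n+1))))"
  unfolding psi_poly_def coeff_monom_mult coeff_one_minus_x_power by simp

lemma degree_psi_poly_le: "degree (psi_poly n) \<le> 2*n+2"
  by (rule degree_le) (auto simp: coeff_psi_poly binomial_eq_0)

lemma psi_poly_reflect: "pcompose (psi_poly n) [:1, -1:] = psi_poly n"
  by (subst poly_eq_poly_eq_iff[symmetric]) (simp add: fun_eq_iff poly_pcompose poly_psi_poly)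

lemma higher_pderiv_pcompose_reflect:
  fixes q :: "'a::idom poly"
  shows "(pderiv ^^ j) (pcompose q [:1, -1:])
           = smult ((-1)^j) (pcompose ((pderiv ^^ j) q) [:1, -1:])"
proof (induction j)
  case (Suc j)
  have "pderiv [:1, -1 :: 'a:] = [:-1:]"
    by (simp add: pderiv_pCons)
  then show ?case
    by (simp add: Suc.IH pderiv_smult pderiv_pcompose)
qed simp

lemma poly_higher_pderiv_at_0:
  fixes q :: "'a::{comm_semiring_1,semiring_no_zero_divisors,semiring_char_0} poly"
  shows "poly ((pderiv ^^ j) q) 0 = fact j * coeff q j"
  by (simp add: poly_0_coeff_0 coeff_higher_pderiv flip: pochhammer_fact)

lemma higher_pderiv_eq_const:
  fixes q :: "'a::{comm_semiring_1,semiring_no_zero_divisors,semiring_char_0} poly"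
  assumes "degree q \<le> m"
  shows "(pderiv ^^ m) q = [:fact m * coeff q m:]"
proof (rule poly_eqI)
  fix i
  show "coeff ((pderiv ^^ m) q) i = coeff [:fact m * coeff q m:] i"
    using assms by (cases i) (auto simp: coeff_higher_pderiv coeff_eq_0 coeff_pCons
                                   simp flip: pochhammer_fact)
qed

lemma poly_higher_pderiv_psi_poly_at_1:
  "poly ((pderiv ^^ j) (psi_poly n)) 1 = (-1)^j * poly ((pderiv ^^ j) (psi_poly n)) 0"
proof -
  have "(pderiv ^^ j) (psi_poly n) = smult ((-1)^j) (pcompose ((pderiv ^^ j) (psi_poly n)) [:1, -1:])"
    using higher_pderiv_pcompose_reflect[of j "psi_poly n"] by (simp only: psi_poly_reflect)
  then have "poly ((pderiv ^^ j) (psi_poly n)) 1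
               = (-1)^j * poly ((pderiv ^^ j) (psi_poly n)) (poly [:1, -1:] 1)"
    by (metis poly_smult poly_pcompose)
  then show ?thesis
    by simp
qed

lemma higher_pderiv_psi_poly_top:
  "(pderiv ^^ (2*n+2)) (psi_poly n) = [:(-1)^(n+1) * fact (2*n+2):]"
  using higher_pderiv_eq_const[OF degree_psi_poly_le] by (simp add: coeff_psi_poly mult.commute)

section \<open>Iterated integration by parts\<close>

lemma has_real_derivative_alternating_pderiv_sum:
  fixes F :: "nat \<Rightarrow> real \<Rightarrow> real" and q :: "real poly"
  assumes F: "\<And>i s. (F i has_real_derivative F (Suc i) s) (at s)"
  shows "((\<lambda>s. \<Sum>j<m. (-1)^j * poly ((pderiv^^j) q) s * F (m - Suc j) s) has_real_derivative
           poly q s * F m s - (-1)^m * poly ((pderiv^^m) q) s * F 0 s) (at s)"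
proof -
  define a where "a j = (-1)^j * poly ((pderiv^^j) q) s * F (m - j) s" for j
  have "((\<lambda>s. (-1)^j * poly ((pderiv^^j) q) s * F (m - Suc j) s) has_real_derivative
          a j - a (Suc j)) (at s)" if "j < m" for j
  proof -
    have "Suc (m - Suc j) = m - j"
      using that by simp
    then show ?thesis
      unfolding a_def
      by (auto intro!: derivative_eq_intros F simp: algebra_simps)
  qed
  then have "((\<lambda>s. \<Sum>j<m. (-1)^j * poly ((pderiv^^j) q) s * F (m - Suc j) s) has_real_derivative
               (\<Sum>j<m. a j - a (Suc j))) (at s)"
    by (intro DERIV_sum) simp
  also have "(\<Sum>j<m. a j - a (Suc j)) = a 0 - a m"
    by (rule sum_lessThan_telescope')
  finally show ?thesis
    by (simp add: a_def)
qed

lemma has_integral_iterated_by_parts: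
  fixes F :: "nat \<Rightarrow> real \<Rightarrow> real" and q :: "real poly"
  assumes F: "\<And>i s. (F i has_real_derivative F (Suc i) s) (at s)" and "a \<le> b"
  shows "((\<lambda>s. poly q s * F m s) has_integral
           (\<Sum>j<m. (-1)^j * (poly ((pderiv^^j) q) b * F (m - Suc j) b
                            - poly ((pderiv^^j) q) a * F (m - Suc j) a))
           + (-1)^m * integral {a..b} (\<lambda>s. poly ((pderiv^^m) q) s * F 0 s)) {a..b}"
proof -
  define H where "H s = (\<Sum>j<m. (-1)^j * poly ((pderiv^^j) q) s * F (m - Suc j) s)" for s
  have "((\<lambda>s. poly q s * F m s - (-1)^m * poly ((pderiv^^m) q) s * F 0 s) has_integral H b - H a) {a..b}"
    using has_real_derivative_alternating_pderiv_sum[where F=F, OF F] \<open>a \<le> b\<close> unfolding H_def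
    by (intro fundamental_theorem_of_calculus)
       (auto simp: has_real_derivative_iff_has_vector_derivative[symmetric]
             intro: has_field_derivative_at_within)
  moreover have "continuous_on {a..b} (F 0)"
    using F by (intro continuous_at_imp_continuous_on ballI DERIV_isCont)
  then have "((\<lambda>s. (-1)^m * (poly ((pderiv^^m) q) s * F 0 s)) has_integral
               (-1)^m * integral {a..b} (\<lambda>s. poly ((pderiv^^m) q) s * F 0 s)) {a..b}"
    by (intro has_integral_mult_right integrable_integral integrable_continuous_interval
              continuous_intros)
  ultimately have "((\<lambda>s. poly q s * F m s) has_integral
      H b - H a + (-1)^m * integral {a..b} (\<lambda>s. poly ((pderiv^^m) q) s * F 0 s)) {a..b}"
    by (auto dest: has_integral_add simp: mult.assoc)
  then show ?thesis
    by (simp add: H_def sum_subtractf right_diff_distrib mult.assoc)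
qed

section \<open>The error as a remainder integral\<close>

lemma fact_mult_c_coef:
  assumes "k \<le> n"
  shows "fact (2*n+2) * c_coef n k = fact (2*n+1-k) * of_nat ((n+1) choose (n-k))"
proof -
  have binom: "real ((n+1) choose (n-k)) = (real n + 1) * fact n / (fact (n-k) * fact (k+1))"
    using assms by (subst binomial_fact) (auto simp: Suc_diff_le)
  have fact: "fact (2*n+2) = (2 * real n + 2) * (fact (2*n+1) :: real)"
    using fact_Suc[of "2*n+1"] by simp
  have field_identity: "(2*N + 2) * D * (A / B * (C / (2 * D))) = C * ((N + 1) * A / B)"
    if "B \<noteq> 0" "D \<noteq> 0" for A B C D N :: real
    using that by (simp add: field_simps)
  show ?thesis
    unfolding c_coef_def binom fact by (rule field_identity) simp_all
qed

lemma poly_higher_pderiv_psi_poly_at_0: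
  assumes "k \<le> n"
  shows "poly ((pderiv ^^ (2*n+1-k)) (psi_poly n)) 0 = (-1)^(n-k) * fact (2*n+2) * c_coef n k"
proof -
  have "2*n+1-k - (n+1) = n-k" "\<not> 2*n+1-k < n+1"
    using assms by auto
  then have "poly ((pderiv ^^ (2*n+1-k)) (psi_poly n)) 0
               = (-1)^(n-k) * (fact (2*n+1-k) * of_nat ((n+1) choose (n-k)))"
    by (simp add: poly_higher_pderiv_at_0 coeff_psi_poly)
  also have "\<dots> = (-1)^(n-k) * (fact (2*n+2) * c_coef n k)"
    by (simp only: fact_mult_c_coef[OF assms])
  finally show ?thesis
    by (simp only: mult.assoc)
qed

lemma minus_one_power_diff:
  "k \<le> n \<Longrightarrow> (-1 :: 'a::ring_1)^(n-k) = (-1)^n * (-1)^k"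
  by (auto simp: minus_one_power_iff)

(* Only the derivatives of psi of orders n+1 .. 2n+1 are nonzero at 0, the symmetry
   psi(1-s) = psi(s) transfers them to 1, and derivative j pairs with F (2n+1-j). *)
lemma psi_poly_boundary_sum:
  fixes F :: "nat \<Rightarrow> real \<Rightarrow> real"
  shows "(\<Sum>j<2*n+2. (-1)^j * (poly ((pderiv^^j) (psi_poly n)) 1 * F (2*n+2 - Suc j) 1
                                - poly ((pderiv^^j) (psi_poly n)) 0 * F (2*n+2 - Suc j) 0))
         = (-1)^n * fact (2*n+2) * (\<Sum>k=0..n. c_coef n k * (F k 0 + (-1)^k * F k 1))"
proof -
  define m where "m = 2*n+2"
  define T where "T k = poly ((pderiv^^(m - Suc k)) (psi_poly n)) 0
                          * (F k 1 - (-1)^(m - Suc k) * F k 0)" for k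
  have "(\<Sum>j<m. (-1)^j * (poly ((pderiv^^j) (psi_poly n)) 1 * F (m - Suc j) 1
                          - poly ((pderiv^^j) (psi_poly n)) 0 * F (m - Suc j) 0))
        = (\<Sum>j<m. T (m - Suc j))"
  proof (intro sum.cong refl)
    fix j
    assume "j \<in> {..<m}"
    then have "m - Suc (m - Suc j) = j"
      by auto
    then show "(-1)^j * (poly ((pderiv^^j) (psi_poly n)) 1 * F (m - Suc j) 1
                - poly ((pderiv^^j) (psi_poly n)) 0 * F (m - Suc j) 0) = T (m - Suc j)"
      by (simp add: T_def poly_higher_pderiv_psi_poly_at_1 algebra_simps)
  qed
  also have "\<dots> = (\<Sum>k<m. T k)"
    by (rule sum.nat_diff_reindex)
  also have "\<dots> = (\<Sum>k=0..n. T k)"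
  proof (rule sum.mono_neutral_right)
    show "\<forall>k\<in>{..<m} - {0..n}. T k = 0"
      by (auto simp: T_def m_def poly_higher_pderiv_at_0 coeff_psi_poly)
  qed (auto simp: m_def)
  also have "\<dots> = (\<Sum>k=0..n. (-1)^n * fact m * (c_coef n k * (F k 0 + (-1)^k * F k 1)))"
  proof (intro sum.cong refl)
    fix k
    assume "k \<in> {0..n}"
    then have k: "k \<le> n"
      by simp
    have "(-1::real)^(m - Suc k) = - ((-1)^k)"
      using k minus_one_power_diff[of k "2*n+1"] by (simp add: m_def)
    then have "T k = (-1)^(n-k) * fact m * c_coef n k * (F k 1 + (-1)^k * F k 0)"
      using poly_higher_pderiv_psi_poly_at_0[OF k] by (simp add: T_def m_def)
    also have "\<dots> = (-1)^n * fact m * (c_coef n k * (F k 0 + (-1)^k * F k 1))"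
      by (simp add: minus_one_power_diff[OF k] algebra_simps flip: power_mult_distrib)
    finally show "T k = (-1)^n * fact m * (c_coef n k * (F k 0 + (-1)^k * F k 1))" .
  qed
  finally show ?thesis
    by (simp add: m_def sum_distrib_left)
qed

(* Substituting t = y s gives the integral of t^(n+1) (y-t)^(n+1) G_(2n+2)(t) over [0,y]. *)
definition erf_remainder :: "nat \<Rightarrow> real \<Rightarrow> real" where
  "erf_remainder n y =
     integral {0..1} (\<lambda>s. y^(2*n+3) * poly (psi_poly n) s * gauss_deriv (2*n+2) (y * s))"

lemma integral_gaussian_rescale:
  fixes y :: real
  assumes "y > 0"
  shows "integral {0..1} (\<lambda>s. exp (- ((y * s)^2))) = integral {0..y} (\<lambda>t. exp (- (t^2))) / y"
proof -
  have "(\<lambda>t. t / y) ` {0..y} = {0..1}"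
  proof safe
    fix u :: real
    assume "u \<in> {0..1}"
    then show "u \<in> (\<lambda>t. t / y) ` {0..y}"
      using assms by (intro image_eqI[where x="u * y"]) (auto simp: mult_le_cancel_right2)
  qed (use assms in auto)
  then show ?thesis
    using integral_stretch_real[of y 0 y "\<lambda>t. exp (- (t^2))"] assms by simp
qed

lemma integral_psi_poly_scaled_gauss_deriv:
  assumes "y > 0"
  shows "y * integral {0..1} (\<lambda>s. poly (psi_poly n) s * (y^(2*n+2) * gauss_deriv (2*n+2) (y * s)))
           = (-1)^(n+1) * fact (2*n+2) *
               (integral {0..y} (\<lambda>t. exp (- (t^2)))
                - (\<Sum>k=0..n. c_coef n k * y^(k+1) * (p k 0 + (-1)^k * p k y * exp (- (y^2)))))"
proof -
  define m where "m = 2*n+2"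
  define F where "F i s = y^i * gauss_deriv i (y * s)" for i s
  define G where "G = integral {0..y} (\<lambda>t. exp (- (t^2)))"
  define S where "S = (\<Sum>k=0..n. c_coef n k * y^(k+1) * (p k 0 + (-1)^k * p k y * exp (- (y^2))))"
  have F_deriv: "(F i has_real_derivative F (Suc i) s) (at s)" for i s
    unfolding F_def by (auto intro!: derivative_eq_intros)
  have S_eq: "S = y * (\<Sum>k=0..n. c_coef n k * (F k 0 + (-1)^k * F k 1))"
    by (simp add: S_def F_def gauss_deriv_def p_def sum_distrib_left algebra_simps)
  have boundary:
    "(\<Sum>j<m. (-1)^j * (poly ((pderiv^^j) (psi_poly n)) 1 * F (m - Suc j) 1
                       - poly ((pderiv^^j) (psi_poly n)) 0 * F (m - Suc j) 0))
     = (-1)^n * fact m * S / y"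
    using psi_poly_boundary_sum[of n F, folded m_def] assms unfolding S_eq by simp
  have "integral {0..1} (\<lambda>s. poly ((pderiv^^m) (psi_poly n)) s * F 0 s)
          = (-1)^(n+1) * fact m * integral {0..1} (\<lambda>s. exp (- ((y * s)^2)))"
    by (simp add: higher_pderiv_psi_poly_top[of n, folded m_def] F_def gauss_deriv_def p_def)
  also have "\<dots> = (-1)^(n+1) * fact m * G / y"
    using assms by (simp add: integral_gaussian_rescale G_def)
  finally have "integral {0..1} (\<lambda>s. poly (psi_poly n) s * F m s)
                  = (-1)^n * fact m * S / y + (-1)^(n+1) * fact m * G / y"
    using has_integral_iterated_by_parts[where F=F and a=0 and b=1 and q="psi_poly n" and m=m,
            OF F_deriv] boundary
    by (simp add: integral_unique m_def)
  then have "y * integral {0..1} (\<lambda>s. poly (psi_poly n) s * F m s) = (-1)^(n+1) * fact m * (G - S)"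
    using assms by (simp add: field_simps)
  then show ?thesis
    unfolding F_def G_def S_def m_def .
qed

lemma erf_remainder_eq:
  assumes "y > 0"
  shows "erf_remainder n y = (-1)^(n+1) * fact (2*n+2) *
           (integral {0..y} (\<lambda>t. exp (- (t^2)))
            - (\<Sum>k=0..n. c_coef n k * y^(k+1) * (p k 0 + (-1)^k * p k y * exp (- (y^2)))))"
proof -
  have "2*n+3 = Suc (2*n+2)"
    by simp
  then have "y^(2*n+3) = y * y^(2*n+2)"
    by (simp only: power_Suc)
  then have "erf_remainder n y = integral {0..1}
               (\<lambda>s. y * (poly (psi_poly n) s * (y^(2*n+2) * gauss_deriv (2*n+2) (y * s))))"
    by (simp add: erf_remainder_def mult_ac)
  also have "\<dots> = y * integral {0..1}
               (\<lambda>s. poly (psi_poly n) s * (y^(2*n+2) * gauss_deriv (2*n+2) (y * s)))"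
    by (rule integral_mult_right)
  finally show ?thesis
    unfolding integral_psi_poly_scaled_gauss_deriv[OF assms] .
qed

lemma eps_err_eq_erf_remainder:
  assumes "y > 0"
  shows "eps_err n y = 2 / sqrt pi * ((-1)^(n+1) / fact (2*n+2)) * erf_remainder n y"
  using assms by (simp add: erf_remainder_eq eps_err_def erf_def f_approx_def right_diff_distrib)

section \<open>Pointwise convergence\<close>

lemma abs_erf_remainder_le:
  assumes "y > 0"
  shows "\<bar>erf_remainder n y\<bar> \<le> fact (2*n+2) * exp (4 * y^2) * y / 2^(2*n+2)"
proof -
  define m where "m = 2*n+2"
  have "2*n+3 = Suc m"
    by (simp add: m_def)
  then have y_power: "y^(2*n+3) = y * y^m"
    by (simp only: power_Suc)
  have "norm (erf_remainder n y) \<le> fact m * exp (4 * y^2) * y / 2^m * (1 - 0)"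
    unfolding erf_remainder_def
  proof (rule integral_bound)
    fix s :: real
    assume s: "s \<in> {0..1}"
    have "\<bar>y^(2*n+3) * poly (psi_poly n) s * gauss_deriv (2*n+2) (y * s)\<bar>
            = y * \<bar>poly (psi_poly n) s\<bar> * (y^m * \<bar>gauss_deriv m (y * s)\<bar>)"
      using assms unfolding y_power by (simp add: abs_mult m_def mult_ac)
    also have "\<dots> \<le> y * 1 * (fact m * exp (4 * y^2) / 2^m)"
      using abs_poly_psi_poly_le_1[OF s] scaled_abs_gauss_deriv_le[OF assms] assms
      by (intro mult_mono) auto
    finally show "norm (y^(2*n+3) * poly (psi_poly n) s * gauss_deriv (2*n+2) (y * s))
                    \<le> fact m * exp (4 * y^2) * y / 2^m"
      by (simp add: mult_ac)
  qed (auto intro!: continuous_intros)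
  then show ?thesis
    by (simp add: m_def)
qed

lemma eps_err_tendsto_0:
  assumes "y > 0"
  shows "(\<lambda>n. eps_err n y) \<longlonglongrightarrow> 0"
proof (rule Lim_null_comparison)
  show "\<forall>\<^sub>F n in sequentially. norm (eps_err n y) \<le> 2 / sqrt pi * exp (4 * y^2) * y / 2^(2*n+2)"
  proof (rule always_eventually, rule allI)
    fix n
    have "norm (eps_err n y) = 2 / sqrt pi / fact (2*n+2) * \<bar>erf_remainder n y\<bar>"
      using eps_err_eq_erf_remainder[OF assms] by (simp add: abs_mult)
    also have "\<dots> \<le> 2 / sqrt pi / fact (2*n+2) * (fact (2*n+2) * exp (4 * y^2) * y / 2^(2*n+2))"
      by (intro mult_left_mono abs_erf_remainder_le assms) simp
    finally show "norm (eps_err n y) \<le> 2 / sqrt pi * exp (4 * y^2) * y / 2^(2*n+2)"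
      by simp
  qed
  show "(\<lambda>n. 2 / sqrt pi * exp (4 * y^2) * y / 2^(2*n+2)) \<longlonglongrightarrow> 0"
    by real_asymp
qed

definition erf_remainder_deriv :: "nat \<Rightarrow> real \<Rightarrow> real" where
  "erf_remainder_deriv n y = integral {0..1} (\<lambda>s. poly (psi_poly n) s *
     ((2 * real n + 3) * y^(2*n+2) * gauss_deriv (2*n+2) (y * s)
      + y^(2*n+3) * s * gauss_deriv (2*n+3) (y * s)))"

lemma erf_remainder_has_real_derivative:
  "(erf_remainder n has_real_derivative erf_remainder_deriv n y) (at y)"
proof -
  have "((\<lambda>y. integral (cbox 0 1)
                (\<lambda>s. y^(2*n+3) * poly (psi_poly n) s * gauss_deriv (2*n+2) (y * s)))
          has_real_derivative integral (cbox 0 1) (\<lambda>s. poly (psi_poly n) s *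
             ((2 * real n + 3) * y^(2*n+2) * gauss_deriv (2*n+2) (y * s)
              + y^(2*n+3) * s * gauss_deriv (2*n+3) (y * s)))) (at y within UNIV)"
  proof (rule leibniz_rule_field_derivative)
    fix x s :: real
    have "2*n+3 = Suc (2*n+2)"
      by simp
    then show "((\<lambda>x. x^(2*n+3) * poly (psi_poly n) s * gauss_deriv (2*n+2) (x * s)) has_real_derivative
            poly (psi_poly n) s * ((2 * real n + 3) * x^(2*n+2) * gauss_deriv (2*n+2) (x * s)
              + x^(2*n+3) * s * gauss_deriv (2*n+3) (x * s))) (at x within UNIV)"
      by (simp only:) (rule derivative_eq_intros refl | simp add: algebra_simps)+
    show "(\<lambda>s. x^(2*n+3) * poly (psi_poly n) s * gauss_deriv (2*n+2) (x * s)) integrable_on cbox 0 1"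
      unfolding box_real by (intro integrable_continuous_interval continuous_intros)
  qed (auto simp: case_prod_beta intro!: continuous_intros)
  then show ?thesis
    unfolding erf_remainder_def erf_remainder_deriv_def box_real by simp
qed

lemma abs_erf_remainder_deriv_le:
  assumes "y > 0"
  shows "\<bar>erf_remainder_deriv n y\<bar>
           \<le> 3 * (2 * real n + 3) * fact (2*n+2) * exp (4 * y^2) / 2^(2*n+3)"
proof -
  define m where "m = 2*n+2"
  define X where "X = fact (Suc m) * exp (4 * y^2) / 2^(Suc m)"
  have m: "2*n+3 = Suc m" "2 * real n + 3 = real (Suc m)"
    by (simp_all add: m_def)
  have "norm (erf_remainder_deriv n y) \<le> 3 * X * (1 - 0)"
    unfolding erf_remainder_deriv_def
  proof (rule integral_bound)
    fix s :: real
    assume s: "s \<in> {0..1}"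
    define A where "A = real (Suc m) * y^m * gauss_deriv m (y * s)"
    define B where "B = y^(Suc m) * s * gauss_deriv (Suc m) (y * s)"
    have "\<bar>A\<bar> = real (Suc m) * (y^m * \<bar>gauss_deriv m (y * s)\<bar>)"
      using assms by (simp add: A_def abs_mult)
    also have "\<dots> \<le> real (Suc m) * (fact m * exp (4 * y^2) / 2^m)"
      using scaled_abs_gauss_deriv_le[OF assms] by (intro mult_left_mono) auto
    also have "\<dots> = 2 * X"
      by (simp add: X_def field_simps)
    finally have A_le: "\<bar>A\<bar> \<le> 2 * X" .
    have "\<bar>B\<bar> = \<bar>s\<bar> * (y^(Suc m) * \<bar>gauss_deriv (Suc m) (y * s)\<bar>)"
      using assms by (simp add: B_def abs_mult mult_ac)
    also have "\<dots> \<le> 1 * X"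
      using s assms unfolding X_def by (intro mult_mono scaled_abs_gauss_deriv_le) auto
    finally have B_le: "\<bar>B\<bar> \<le> 1 * X" .
    from A_le B_le have "\<bar>poly (psi_poly n) s\<bar> * \<bar>A + B\<bar> \<le> 1 * (3 * X)"
      using abs_poly_psi_poly_le_1[OF s] abs_triangle_ineq[of A B] by (intro mult_mono) auto
    then show "norm (poly (psi_poly n) s * ((2 * real n + 3) * y^(2*n+2) * gauss_deriv (2*n+2) (y * s)
                 + y^(2*n+3) * s * gauss_deriv (2*n+3) (y * s))) \<le> 3 * X"
      unfolding m by (simp add: A_def B_def m_def abs_mult)
  qed (auto intro!: continuous_intros)
  moreover have "3 * X = 3 * (2 * real n + 3) * fact (2*n+2) * exp (4 * y^2) / 2^(2*n+3)"
    unfolding X_def m fact_Suc by (simp add: m_def)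
  ultimately show ?thesis
    by simp
qed

lemma deriv_eps_err:
  assumes "y > 0"
  shows "deriv (eps_err n) y = 2 / sqrt pi * ((-1)^(n+1) / fact (2*n+2)) * erf_remainder_deriv n y"
proof (rule DERIV_imp_deriv, rule has_field_derivative_transform_within_open)
  show "((\<lambda>z. 2 / sqrt pi * ((-1)^(n+1) / fact (2*n+2)) * erf_remainder n z) has_real_derivative
          2 / sqrt pi * ((-1)^(n+1) / fact (2*n+2)) * erf_remainder_deriv n y) (at y)"
    by (intro DERIV_cmult erf_remainder_has_real_derivative)
  show "2 / sqrt pi * ((-1)^(n+1) / fact (2*n+2)) * erf_remainder n z = eps_err n z"
    if "z \<in> {0<..}" for z
    using that by (simp add: eps_err_eq_erf_remainder)
qed (use assms in auto)

lemma deriv_eps_err_tendsto_0: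
  assumes "y > 0"
  shows "(\<lambda>n. deriv (eps_err n) y) \<longlonglongrightarrow> 0"
proof (rule Lim_null_comparison)
  show "\<forall>\<^sub>F n in sequentially.
          norm (deriv (eps_err n) y) \<le> 2 / sqrt pi * 3 * (2 * real n + 3) * exp (4 * y^2) / 2^(2*n+3)"
  proof (rule always_eventually, rule allI)
    fix n
    have "norm (deriv (eps_err n) y) = 2 / sqrt pi / fact (2*n+2) * \<bar>erf_remainder_deriv n y\<bar>"
      using deriv_eps_err[OF assms] by (simp add: abs_mult)
    also have "\<dots> \<le> 2 / sqrt pi / fact (2*n+2)
                         * (3 * (2 * real n + 3) * fact (2*n+2) * exp (4 * y^2) / 2^(2*n+3))"
      by (intro mult_left_mono abs_erf_remainder_deriv_le assms) simp
    also have "\<dots> = 2 / sqrt pi * 3 * (2 * real n + 3) * exp (4 * y^2) / 2^(2*n+3)"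
      by simp
    finally show "norm (deriv (eps_err n) y) \<le> 2 / sqrt pi * 3 * (2 * real n + 3) * exp (4 * y^2) / 2^(2*n+3)" .
  qed
  show "(\<lambda>n. 2 / sqrt pi * 3 * (2 * real n + 3) * exp (4 * y^2) / 2^(2*n+3)) \<longlonglongrightarrow> 0"
    by real_asymp
qed

section \<open>Failure of uniform convergence\<close>

lemma poly_times_gaussian_tendsto_0:
  fixes q :: "real poly"
  shows "((\<lambda>x. poly q x * exp (- (x^2))) \<longlongrightarrow> 0) at_top"
proof -
  have "((\<lambda>x. \<Sum>i\<le>degree q. coeff q i * (x^i * exp (- (x^2)))) \<longlongrightarrow> 0) at_top"
    by (intro tendsto_null_sum tendsto_mult_right_zero) real_asymp
  then show ?thesis
    by (simp add: poly_altdef sum_distrib_left mult_ac)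
qed

lemma erf_nonneg_le_sqrt_pi:
  assumes "0 \<le> x"
  shows "0 \<le> erf x" and "erf x \<le> sqrt pi"
proof -
  let ?I = "integral {0..x} (\<lambda>t. exp (- (t^2)))"
  have "((\<lambda>t. inverse (1 + t^2)) has_integral (arctan x - arctan 0)) {0..x}"
    using assms
    by (intro fundamental_theorem_of_calculus)
       (auto simp: has_real_derivative_iff_has_vector_derivative[symmetric]
             intro: has_field_derivative_at_within DERIV_arctan)
  then have arctan_integral: "integral {0..x} (\<lambda>t. inverse (1 + t^2)) = arctan x"
    by (simp add: integral_unique)
  have "?I \<le> integral {0..x} (\<lambda>t. inverse (1 + t^2))"
  proof (rule integral_le)
    fix t :: real
    have "inverse (exp (t^2)) \<le> inverse (1 + t^2)"
      by (intro le_imp_inverse_le exp_ge_add_one_self) (simp add: add_pos_nonneg)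
    then show "exp (- (t^2)) \<le> inverse (1 + t^2)"
      by (simp add: exp_minus)
  qed (auto intro!: integrable_continuous_interval continuous_intros
             simp: add_nonneg_eq_0_iff)
  also have "\<dots> = arctan x"
    by (rule arctan_integral)
  also have "arctan x \<le> pi / 2"
    using arctan_ubound[of x] by simp
  finally have "?I \<le> pi / 2" .
  have erf_eq: "erf x = 2 / sqrt pi * ?I"
    using assms by (simp add: erf_def)
  have "0 \<le> ?I"
    using assms by (intro integral_nonneg integrable_continuous_interval continuous_intros) auto
  then show "0 \<le> erf x"
    by (simp add: erf_eq)
  have "erf x \<le> 2 / sqrt pi * (pi / 2)"
    unfolding erf_eq using \<open>?I \<le> pi / 2\<close> by (rule mult_left_mono) simp
  also have "\<dots> = sqrt pi"
    by (simp add: real_div_sqrt)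
  finally show "erf x \<le> sqrt pi" .
qed

lemma poly_plus_gaussian_unbounded:
  fixes P Q :: "real poly"
  assumes "P \<noteq> 0"
  shows "\<exists>x>0. B \<le> \<bar>poly (pCons 0 P) x + poly Q x * exp (- (x^2))\<bar>"
proof -
  obtain r where r: "\<And>x. r \<le> norm x \<Longrightarrow> B + 1 \<le> norm (poly (pCons 0 P) x)"
    using poly_infinity[OF assms, of "B + 1" 0] by blast
  have "\<forall>\<^sub>F x in at_top. dist (poly Q x * exp (- (x^2))) 0 < 1"
    by (rule tendstoD[OF poly_times_gaussian_tendsto_0]) simp
  then obtain M where M: "\<And>x. x \<ge> M \<Longrightarrow> \<bar>poly Q x * exp (- (x^2))\<bar> < 1"
    by (auto simp: eventually_at_top_linorder)
  define x where "x = max M (max r 1)"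
  have "B + 1 \<le> \<bar>poly (pCons 0 P) x\<bar>" and "\<bar>poly Q x * exp (- (x^2))\<bar> < 1"
    using r[of x] M[of x] by (auto simp: x_def le_max_iff_disj)
  then have "B \<le> \<bar>poly (pCons 0 P) x + poly Q x * exp (- (x^2))\<bar>"
    by linarith
  moreover have "x > 0"
    by (simp add: x_def)
  ultimately show ?thesis
    by blast
qed

lemma f_approx_unbounded: "\<exists>x>0. B \<le> \<bar>f_approx n x\<bar>"
proof -
  define P where "P = (\<Sum>k=0..n. monom (c_coef n k * p k 0) k)"
  define Q where "Q = (\<Sum>k=0..n. smult (c_coef n k * (-1)^k) (monom 1 (k+1) * p_poly k))"
  have f_approx_eq: "f_approx n x = 2 / sqrt pi * (poly (pCons 0 P) x + poly Q x * exp (- (x^2)))"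
    for x
    by (simp add: f_approx_def P_def Q_def p_def poly_sum poly_monom sum_distrib_left
                  sum_distrib_right sum.distrib algebra_simps)
  have "coeff P 0 = c_coef n 0 * p 0 0"
    by (simp add: P_def coeff_sum coeff_monom)
  then have "P \<noteq> 0"
    by (auto simp: c_coef_def p_def)
  then obtain x where "x > 0"
    and bound: "B * sqrt pi / 2 \<le> \<bar>poly (pCons 0 P) x + poly Q x * exp (- (x^2))\<bar>"
    using poly_plus_gaussian_unbounded by blast
  have "B = 2 / sqrt pi * (B * sqrt pi / 2)"
    by simp
  also have "\<dots> \<le> 2 / sqrt pi * \<bar>poly (pCons 0 P) x + poly Q x * exp (- (x^2))\<bar>"
    using bound by (rule mult_left_mono) simp
  also have "\<dots> = \<bar>f_approx n x\<bar>"
    unfolding f_approx_eq abs_mult by simp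
  finally show ?thesis
    using \<open>x > 0\<close> by blast
qed

lemma f_approx_not_uniform_limit: "\<not> uniform_limit {0<..} f_approx erf sequentially"
proof
  assume "uniform_limit {0<..} f_approx erf sequentially"
  then have "\<forall>\<^sub>F n in sequentially. \<forall>x\<in>{0<..}. dist (f_approx n x) (erf x) < 1"
    by (rule uniform_limitD) simp
  then obtain n where n: "\<And>x. x > 0 \<Longrightarrow> dist (f_approx n x) (erf x) < 1"
    by (auto simp: eventually_sequentially)
  obtain x where "x > 0" "1 + sqrt pi \<le> \<bar>f_approx n x\<bar>"
    using f_approx_unbounded by blast
  with n[of x] erf_nonneg_le_sqrt_pi[of x] show False
    by (simp add: dist_real_def)
qed

theorem theorem2p2:
  shows "(\<forall>x::real. x > 0 \<longrightarrow>
            ((\<lambda>n. deriv (eps_err n) x) \<longlonglongrightarrow> 0) \<and>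
            ((\<lambda>n. eps_err n x) \<longlonglongrightarrow> 0) \<and>
            ((\<lambda>n. f_approx n x) \<longlonglongrightarrow> erf x)) \<and>
         \<not> uniform_limit {0<..} f_approx erf sequentially"
proof (intro conjI allI impI)
  fix x :: real
  assume "x > 0"
  then show "(\<lambda>n. deriv (eps_err n) x) \<longlonglongrightarrow> 0"
    by (rule deriv_eps_err_tendsto_0)
  show "(\<lambda>n. eps_err n x) \<longlonglongrightarrow> 0"
    using \<open>x > 0\<close> by (rule eps_err_tendsto_0)
  from tendsto_diff[OF tendsto_const[of "erf x"] this]
  show "(\<lambda>n. f_approx n x) \<longlonglongrightarrow> erf x"
    by (simp add: eps_err_def)
qed (rule f_approx_not_uniform_limit)

end
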